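(* Let $X=\{X_{\mathbf i}\}_{\mathbf i\in\mathbb R^2}$ be a max-stable random field with unit Fréchet margins $F(x)=\exp(-1/x)$, and let $\mathbf A,\mathbf B\subset\mathbb R^2$ be finite nonempty sets. Then the limits below exist and $$CI(\mathbf A,\mathbf B)=\sum_{\mathbf j\in\mathbf A}\frac{\sum_{\emptyset\ne\mathbf J\subseteq\mathbf B}(-1)^{|\mathbf J|+1}\lambda_{\mathbf J,\{\mathbf j\}}}{\epsilon_{\mathbf B}},$$ where $$CI(\mathbf A,\mathbf B)=\lim_{u\uparrow1}E\Big(\sum_{\mathbf j\in\mathbf A}\mathbf 1_{\{F(X_{\mathbf j})>u\}}\ \Big|\ \bigcup_{\mathbf i\in\mathbf B}\{F(X_{\mathbf i})>u\}\Big)$$ and, for finite nonempty $\mathbf J,\mathbf K\subset\mathbb R^2$, $\lambda_{\mathbf J,\mathbf K}=\lim_{u\uparrow1}P\big(\bigcap_{\mathbf j\in\mathbf J}\{F(X_{\mathbf j})>u\}\ \big|\ \bigcap_{\mathbf k\in\mathbf K}\{F(X_{\mathbf k})>u\}\big)$.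
   Context: A random field $X=\{X_{\mathbf i}\}_{\mathbf i\in\mathbb R^2}$ is max-stable with unit Fréchet margins if every $X_{\mathbf i}$ has distribution function $F(x)=\exp(-1/x)$, $x>0$, and for every finite set $\mathbf B=\{\mathbf i_1,\dots,\mathbf i_k\}\subset\mathbb R^2$ the joint distribution is a multivariate extreme value distribution $P(X_{\mathbf i_1}\le x_1,\dots,X_{\mathbf i_k}\le x_k)=\exp(-V_{\mathbf B}(x_1,\dots,x_k))$, $x_j>0$, where the exponent function $V_{\mathbf B}$ is homogeneous of order $-1$. The extremal coefficient of $\mathbf B$ is $\epsilon_{\mathbf B}=V_{\mathbf B}(1,\dots,1)$, so that $P(X_{\mathbf k}\le x\ \forall \mathbf k\in\mathbf B)=\exp(-\epsilon_{\mathbf B}/x)$ for $x>0$. *)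

theory Defs
  imports "HOL-Probability.Probability"
begin

definition frechet_F :: "real \<Rightarrow> real" where
  "frechet_F x = (if 0 < x then exp (- 1 / x) else 0)"

definition exponent_fun ::
  "'a measure \<Rightarrow> ('i \<Rightarrow> 'a \<Rightarrow> real) \<Rightarrow> 'i set \<Rightarrow> ('i \<Rightarrow> real) \<Rightarrow> real" where
  "exponent_fun M X B x = - ln (measure M {\<omega> \<in> space M. \<forall>k\<in>B. X k \<omega> \<le> x k})"

text \<open>Max-stable random field with unit Frechet margins: every finite-dimensional
  distribution is a multivariate extreme value distribution exp(-V_B), V_B finite and
  homogeneous of order -1 on the positive orthant.\<close>
definition max_stable_frechet :: "'a measure \<Rightarrow> ('i \<Rightarrow> 'a \<Rightarrow> real) \<Rightarrow> bool" where
  "max_stable_frechet M X \<longleftrightarrow>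
     prob_space M \<and>
     (\<forall>i. X i \<in> borel_measurable M) \<and>
     (\<forall>i x. 0 < x \<longrightarrow> measure M {\<omega> \<in> space M. X i \<omega> \<le> x} = frechet_F x) \<and>
     (\<forall>B. finite B \<and> B \<noteq> {} \<longrightarrow>
        (\<forall>x. (\<forall>k\<in>B. 0 < x k) \<longrightarrow> 0 < measure M {\<omega> \<in> space M. \<forall>k\<in>B. X k \<omega> \<le> x k}) \<and>
        (\<forall>x t. (\<forall>k\<in>B. 0 < x k) \<and> 0 < t \<longrightarrow>
            exponent_fun M X B (\<lambda>k. t * x k) = exponent_fun M X B x / t))"

definition extremal_coeff :: "'a measure \<Rightarrow> ('i \<Rightarrow> 'a \<Rightarrow> real) \<Rightarrow> 'i set \<Rightarrow> real" where
  "extremal_coeff M X B = exponent_fun M X B (\<lambda>_. 1)"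

definition exceed :: "'a measure \<Rightarrow> ('i \<Rightarrow> 'a \<Rightarrow> real) \<Rightarrow> real \<Rightarrow> 'i \<Rightarrow> 'a set" where
  "exceed M X u j = {\<omega> \<in> space M. frechet_F (X j \<omega>) > u}"

definition cond_prob_ev :: "'a measure \<Rightarrow> 'a set \<Rightarrow> 'a set \<Rightarrow> real" where
  "cond_prob_ev M E C = measure M (E \<inter> C) / measure M C"

definition cond_exp_ev :: "'a measure \<Rightarrow> ('a \<Rightarrow> real) \<Rightarrow> 'a set \<Rightarrow> real" where
  "cond_exp_ev M Y C = (\<integral>\<omega>. Y \<omega> * indicator C \<omega> \<partial>M) / measure M C"

definition lambda_fun :: "'a measure \<Rightarrow> ('i \<Rightarrow> 'a \<Rightarrow> real) \<Rightarrow> 'i set \<Rightarrow> 'i set \<Rightarrow> real \<Rightarrow> real" where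
  "lambda_fun M X J K u =
     cond_prob_ev M (\<Inter>j\<in>J. exceed M X u j) (\<Inter>k\<in>K. exceed M X u k)"

definition tail_lambda :: "'a measure \<Rightarrow> ('i \<Rightarrow> 'a \<Rightarrow> real) \<Rightarrow> 'i set \<Rightarrow> 'i set \<Rightarrow> real" where
  "tail_lambda M X J K = Lim (at_left 1) (lambda_fun M X J K)"

definition CI_fun :: "'a measure \<Rightarrow> ('i \<Rightarrow> 'a \<Rightarrow> real) \<Rightarrow> 'i set \<Rightarrow> 'i set \<Rightarrow> real \<Rightarrow> real" where
  "CI_fun M X A B u =
     cond_exp_ev M (\<lambda>\<omega>. \<Sum>j\<in>A. indicator (exceed M X u j) \<omega>) (\<Union>i\<in>B. exceed M X u i)"

end

theory Submission
  imports Defs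
begin

text \<open>
  Write u = F(x) for the threshold level x = -1/ln u.  Max-stability and homogeneity of the
  exponent function give P(X_k \<le> x for all k \<in> I) = exp(-eps_I / x) = u ^ eps_I.  Everything
  else is inclusion-exclusion: the probability that all sites of a finite set K exceed the
  level is 1 - \<Sum>_{I} (-1)^(|I|+1) u^eps_I, hence lambda_{J,{j}}(u) is a signed sum of the
  difference quotients (1 - u^eps_I)/(1 - u), each tending to eps_I as u \<up> 1; this proves that
  the limits lambda_{J,{j}} exist.  For the conditional expectation, inclusion-exclusion on the
  union of exceedance events expresses E(\<Sum>_j 1{F(X_j)>u} 1_U) through the lambda functions,
  while P(U) = 1 - u^eps_B; so CI(A,B)(u) equals the claimed signed sum times
  (1 - u)/(1 - u^eps_B), which tends to 1/eps_B.
\<close>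

lemma (in finite_measure) measure_UN_inclusion_exclusion:
  assumes "finite A" and "\<And>a. a \<in> A \<Longrightarrow> G a \<in> sets M"
  shows "measure M (\<Union>(G ` A)) =
    (\<Sum>B | B \<subseteq> A \<and> B \<noteq> {}. (- 1) ^ (card B + 1) * measure M (\<Inter>(G ` B)))"
proof -
  interpret Incl_Excl "\<lambda>S. S \<in> sets M" "measure M"
    by unfold_locales (auto simp: disjnt_def finite_measure_Union)
  show ?thesis
    using restricted_indexed assms by blast
qed

text \<open>The signed count of the nonempty subsets of a nonempty finite set is 1 (inclusion-exclusion
  applied to a family of identical sets).\<close>
lemma alternating_sum_nonempty_subsets:
  assumes "finite K" and "K \<noteq> {}"
  shows "(\<Sum>I | I \<subseteq> K \<and> I \<noteq> {}. (- 1) ^ (card I + 1)) = (1::real)"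
proof -
  have "indicator (\<Union>((\<lambda>_. UNIV) ` K)) () =
    (\<Sum>I | I \<subseteq> K \<and> I \<noteq> {}. (- 1) ^ (card I + 1) * indicator (\<Inter>((\<lambda>_. UNIV) ` I)) () :: real)"
    by (rule Incl_Excl_UN) (use assms(1) in \<open>auto simp: disjnt_iff indicator_def\<close>)
  then show ?thesis
    using assms(2) by simp
qed

text \<open>The derivative of u \<mapsto> u powr c at 1, as a one-sided difference quotient.\<close>
lemma powr_difference_quotient_at_left:
  "((\<lambda>u. (1 - u powr c) / (1 - u)) \<longlongrightarrow> c) (at_left (1::real))"
proof -
  have "((\<lambda>u. u powr c) has_real_derivative c * 1 powr (c - 1)) (at 1)"
    by (rule has_real_derivative_powr) simp
  then have "((\<lambda>y. (y powr c - 1 powr c) / (y - 1)) \<longlongrightarrow> c) (at_left 1)"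
    unfolding has_field_derivative_iff by (simp add: filterlim_at_split)
  moreover have "(y powr c - 1 powr c) / (y - 1) = (1 - y powr c) / (1 - y)" for y :: real
    by (metis minus_diff_eq minus_divide_divide powr_one_eq_one)
  ultimately show ?thesis
    by simp
qed

text \<open>Its reciprocal; this is the limit of P(one exceedance) / P(some exceedance in B).\<close>
lemma difference_quotient_powr_at_left:
  assumes "c \<noteq> 0"
  shows "((\<lambda>u. (1 - u) / (1 - u powr c)) \<longlongrightarrow> 1 / c) (at_left (1::real))"
proof -
  have "\<forall>\<^sub>F u in at_left 1. (1 - u) / (1 - u powr c) = 1 / ((1 - u powr c) / (1 - u))"
    by (rule eventually_mono[OF eventually_at_left_real[OF zero_less_one]]) auto
  then show ?thesis
    by (rule tendsto_cong[THEN iffD2]) (intro tendsto_intros powr_difference_quotient_at_left assms)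
qed

text \<open>The Frechet level whose distribution function value is u, i.e. the u-quantile.\<close>
definition frechet_level :: "real \<Rightarrow> real" where
  "frechet_level u = - 1 / ln u"

lemma frechet_level_pos: "0 < u \<Longrightarrow> u < 1 \<Longrightarrow> 0 < frechet_level u"
  unfolding frechet_level_def by (simp add: divide_neg_neg)

lemma exp_div_frechet_level:
  "0 < u \<Longrightarrow> exp (- (c / frechet_level u)) = u powr c"
  unfolding frechet_level_def by (simp add: powr_def)

lemma frechet_F_level: "0 < u \<Longrightarrow> u < 1 \<Longrightarrow> frechet_F (frechet_level u) = u"
  using exp_div_frechet_level[of u 1] frechet_level_pos[of u] by (simp add: frechet_F_def)

lemma less_frechet_F_iff:
  assumes "0 < u" and "u < 1"
  shows "u < frechet_F y \<longleftrightarrow> frechet_level u < y"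
proof (cases "0 < y")
  case True
  have "u < frechet_F y \<longleftrightarrow> ln u < ln (exp (- 1 / y))"
    using True assms by (simp add: frechet_F_def del: ln_exp)
  also have "\<dots> \<longleftrightarrow> ln u < - 1 / y"
    by simp
  also have "\<dots> \<longleftrightarrow> frechet_level u < y"
    using True assms unfolding frechet_level_def by (auto simp: field_simps)
  finally show ?thesis .
next
  case False
  then show ?thesis
    using frechet_level_pos[OF assms] assms by (simp add: frechet_F_def)
qed

lemma borel_measurable_frechet_F [measurable]: "frechet_F \<in> borel_measurable borel"
  unfolding frechet_F_def by measurable

lemma sum_times_indicator:
  "(\<Sum>j\<in>A. indicator (E j) x) * indicator U x = (\<Sum>j\<in>A. indicator (E j \<inter> U) x :: real)"
  by (simp only: sum_distrib_right indicator_inter_arith)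

locale max_stable_field =
  fixes M :: "'a measure" and X :: "'i \<Rightarrow> 'a \<Rightarrow> real"
  assumes max_stable: "max_stable_frechet M X"
begin

sublocale prob_space M
  using max_stable by (simp add: max_stable_frechet_def)

lemma measurable_site [measurable]: "X i \<in> borel_measurable M"
  using max_stable by (simp add: max_stable_frechet_def)

lemma marginal_cdf: "0 < x \<Longrightarrow> prob {\<omega> \<in> space M. X i \<omega> \<le> x} = frechet_F x"
  using max_stable by (simp add: max_stable_frechet_def)

text \<open>Homogeneity of the exponent function: P(max_{k\<in>I} X_k \<le> x) = exp(-eps_I / x).\<close>
lemma joint_cdf_diagonal:
  assumes "finite I" and "I \<noteq> {}" and "0 < x"
  shows "prob {\<omega> \<in> space M. \<forall>k\<in>I. X k \<omega> \<le> x} = exp (- extremal_coeff M X I / x)"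
proof -
  have laws: "(\<forall>x. (\<forall>k\<in>I. 0 < x k) \<longrightarrow> 0 < prob {\<omega> \<in> space M. \<forall>k\<in>I. X k \<omega> \<le> x k}) \<and>
      (\<forall>x t. (\<forall>k\<in>I. 0 < x k) \<and> 0 < t \<longrightarrow> exponent_fun M X I (\<lambda>k. t * x k) = exponent_fun M X I x / t)"
    using max_stable assms(1,2) unfolding max_stable_frechet_def by blast
  have pos: "0 < prob {\<omega> \<in> space M. \<forall>k\<in>I. X k \<omega> \<le> x}"
    using laws[THEN conjunct1, rule_format, of "\<lambda>_. x"] assms(3) by simp
  have hom: "exponent_fun M X I (\<lambda>_. x) = exponent_fun M X I (\<lambda>_. 1) / x"
    using laws[THEN conjunct2, rule_format, of "\<lambda>_. 1" x] assms(3) by simp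
  have "prob {\<omega> \<in> space M. \<forall>k\<in>I. X k \<omega> \<le> x} = exp (- exponent_fun M X I (\<lambda>_. x))"
    using pos by (simp add: exponent_fun_def)
  then show ?thesis
    using hom by (simp add: extremal_coeff_def)
qed

lemma emeasure_less_infinity: "emeasure M S < \<infinity>"
  using emeasure_finite[of S] by (simp add: less_top[symmetric])

lemma exceed_measurable [measurable]: "exceed M X u k \<in> sets M"
  unfolding exceed_def by measurable

lemma nonexceed_eq:
  assumes "0 < u" and "u < 1"
  shows "space M - exceed M X u k = {\<omega> \<in> space M. X k \<omega> \<le> frechet_level u}"
  using assms by (auto simp: exceed_def less_frechet_F_iff)

lemma exceed_prob:
  assumes "0 < u" and "u < 1"
  shows "prob (exceed M X u k) = 1 - u"
proof -
  have "prob (space M - exceed M X u k) = u"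
    using assms by (simp add: nonexceed_eq marginal_cdf frechet_level_pos frechet_F_level)
  then show ?thesis
    using prob_compl[of "exceed M X u k"] by simp
qed

lemma nonexceed_all_prob:
  assumes "finite I" and "I \<noteq> {}" and "0 < u" and "u < 1"
  shows "prob {\<omega> \<in> space M. \<forall>k\<in>I. X k \<omega> \<le> frechet_level u} = u powr extremal_coeff M X I"
  using assms by (simp add: joint_cdf_diagonal frechet_level_pos exp_div_frechet_level)

lemma union_exceed_prob:
  assumes "finite B" and "B \<noteq> {}" and "0 < u" and "u < 1"
  shows "prob (\<Union>i\<in>B. exceed M X u i) = 1 - u powr extremal_coeff M X B"
proof -
  have "(\<Union>i\<in>B. exceed M X u i) = space M - {\<omega> \<in> space M. \<forall>k\<in>B. X k \<omega> \<le> frechet_level u}"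
    using assms(3,4) nonexceed_eq by (auto simp: exceed_def)
  then show ?thesis
    using assms by (simp add: prob_compl nonexceed_all_prob)
qed

text \<open>All sites of K exceed level u: inclusion-exclusion over the complementary events.\<close>
lemma inter_exceed_prob:
  assumes "finite K" and "K \<noteq> {}" and "0 < u" and "u < 1"
  shows "prob (\<Inter>k\<in>K. exceed M X u k) =
    1 - (\<Sum>I | I \<subseteq> K \<and> I \<noteq> {}. (- 1) ^ (card I + 1) * u powr extremal_coeff M X I)"
proof -
  let ?N = "\<lambda>k. space M - exceed M X u k"
  have inter_eq: "(\<Inter>k\<in>K. exceed M X u k) = space M - (\<Union>k\<in>K. ?N k)"
    using assms(2) by (auto simp: exceed_def)
  have "prob (space M - (\<Union>k\<in>K. ?N k)) = 1 - prob (\<Union>k\<in>K. ?N k)"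
    using assms(1) by (intro prob_compl sets.finite_UN) auto
  then have "prob (\<Inter>k\<in>K. exceed M X u k) = 1 - prob (\<Union>k\<in>K. ?N k)"
    unfolding inter_eq .
  also have "prob (\<Union>k\<in>K. ?N k) =
      (\<Sum>I | I \<subseteq> K \<and> I \<noteq> {}. (- 1) ^ (card I + 1) * prob (\<Inter>(?N ` I)))"
    by (rule measure_UN_inclusion_exclusion) (use assms(1) in auto)
  also have "\<dots> = (\<Sum>I | I \<subseteq> K \<and> I \<noteq> {}. (- 1) ^ (card I + 1) * u powr extremal_coeff M X I)"
  proof (intro sum.cong refl)
    fix I assume "I \<in> {I. I \<subseteq> K \<and> I \<noteq> {}}"
    then have I: "finite I" "I \<noteq> {}"
      using assms(1) finite_subset by auto
    then have "\<Inter>(?N ` I) = {\<omega> \<in> space M. \<forall>k\<in>I. X k \<omega> \<le> frechet_level u}"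
      using assms(3,4) by (auto simp: nonexceed_eq)
    then show "(- 1) ^ (card I + 1) * prob (\<Inter>(?N ` I)) =
        (- 1) ^ (card I + 1) * u powr extremal_coeff M X I"
      using nonexceed_all_prob[OF I assms(3,4)] by (simp only:)
  qed
  finally show ?thesis .
qed

text \<open>lambda_{J,{j}}(u) as a signed sum of difference quotients (1 - u powr eps_I)/(1 - u);
  the constant terms cancel by the alternating sum identity.\<close>
lemma lambda_fun_eq:
  assumes "finite J" and "0 < u" and "u < 1"
  shows "lambda_fun M X J {j} u = (\<Sum>I | I \<subseteq> insert j J \<and> I \<noteq> {}.
    (- 1) ^ (card I + 1) * ((1 - u powr extremal_coeff M X I) / (1 - u)))"
proof -
  let ?S = "{I. I \<subseteq> insert j J \<and> I \<noteq> {}}"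
  have "lambda_fun M X J {j} u = prob (\<Inter>k\<in>insert j J. exceed M X u k) / (1 - u)"
    using assms by (simp add: lambda_fun_def cond_prob_ev_def exceed_prob Int_commute)
  also have "prob (\<Inter>k\<in>insert j J. exceed M X u k) =
      (\<Sum>I\<in>?S. (- 1) ^ (card I + 1)) - (\<Sum>I\<in>?S. (- 1) ^ (card I + 1) * u powr extremal_coeff M X I)"
    using assms alternating_sum_nonempty_subsets[of "insert j J"] by (subst inter_exceed_prob) auto
  also have "\<dots> = (\<Sum>I\<in>?S. (- 1) ^ (card I + 1) * (1 - u powr extremal_coeff M X I))"
    by (simp add: sum_subtractf[symmetric] algebra_simps)
  finally show ?thesis
    by (simp add: sum_divide_distrib)
qed

lemma lambda_fun_tendsto:
  assumes "finite J"
  shows "(lambda_fun M X J {j} \<longlongrightarrow>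
    (\<Sum>I | I \<subseteq> insert j J \<and> I \<noteq> {}. (- 1) ^ (card I + 1) * extremal_coeff M X I)) (at_left 1)"
proof -
  have "\<forall>\<^sub>F u in at_left 1. lambda_fun M X J {j} u = (\<Sum>I | I \<subseteq> insert j J \<and> I \<noteq> {}.
      (- 1) ^ (card I + 1) * ((1 - u powr extremal_coeff M X I) / (1 - u)))"
    by (rule eventually_mono[OF eventually_at_left_real[OF zero_less_one]]) (simp add: lambda_fun_eq assms)
  then show ?thesis
    by (rule tendsto_cong[THEN iffD2]) (intro tendsto_intros powr_difference_quotient_at_left)
qed

lemma tail_lambda_eq:
  assumes "finite J"
  shows "tail_lambda M X J {j} =
    (\<Sum>I | I \<subseteq> insert j J \<and> I \<noteq> {}. (- 1) ^ (card I + 1) * extremal_coeff M X I)"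
  unfolding tail_lambda_def using lambda_fun_tendsto[OF assms] by (rule tendsto_Lim[rotated]) simp

lemma lambda_fun_tendsto_tail:
  assumes "finite J"
  shows "(lambda_fun M X J {j} \<longlongrightarrow> tail_lambda M X J {j}) (at_left 1)"
  unfolding tail_lambda_eq[OF assms] by (rule lambda_fun_tendsto[OF assms])

lemma exceed_inter_union_prob:
  assumes "finite B" and "0 < u" and "u < 1"
  shows "prob (exceed M X u j \<inter> (\<Union>i\<in>B. exceed M X u i)) =
    (1 - u) * (\<Sum>J | J \<subseteq> B \<and> J \<noteq> {}. (- 1) ^ (card J + 1) * lambda_fun M X J {j} u)"
proof -
  let ?E = "exceed M X u"
  have "prob (?E j \<inter> (\<Union>i\<in>B. ?E i)) = prob (\<Union>i\<in>B. ?E j \<inter> ?E i)"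
    by (simp only: Int_UN_distrib)
  also have "\<dots> = (\<Sum>J | J \<subseteq> B \<and> J \<noteq> {}. (- 1) ^ (card J + 1) * prob (\<Inter>i\<in>J. ?E j \<inter> ?E i))"
    by (rule measure_UN_inclusion_exclusion) (use assms(1) in auto)
  also have "\<dots> = (\<Sum>J | J \<subseteq> B \<and> J \<noteq> {}. (- 1) ^ (card J + 1) * ((1 - u) * lambda_fun M X J {j} u))"
  proof (intro sum.cong refl)
    fix J assume "J \<in> {J. J \<subseteq> B \<and> J \<noteq> {}}"
    then have "(\<Inter>i\<in>J. ?E j \<inter> ?E i) = (\<Inter>i\<in>J. ?E i) \<inter> ?E j"
      by auto
    then show "(- 1) ^ (card J + 1) * prob (\<Inter>i\<in>J. ?E j \<inter> ?E i) =
        (- 1) ^ (card J + 1) * ((1 - u) * lambda_fun M X J {j} u)"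
      using assms(2,3) by (simp add: lambda_fun_def cond_prob_ev_def exceed_prob)
  qed
  finally show ?thesis
    by (simp add: sum_distrib_left ac_simps)
qed

lemma CI_fun_eq:
  assumes "finite A" and "finite B" and "B \<noteq> {}" and "0 < u" and "u < 1"
  shows "CI_fun M X A B u =
    (\<Sum>j\<in>A. \<Sum>J | J \<subseteq> B \<and> J \<noteq> {}. (- 1) ^ (card J + 1) * lambda_fun M X J {j} u)
      * ((1 - u) / (1 - u powr extremal_coeff M X B))"
proof -
  let ?E = "exceed M X u" and ?U = "\<Union>i\<in>B. exceed M X u i"
  let ?S = "\<Sum>j\<in>A. \<Sum>J | J \<subseteq> B \<and> J \<noteq> {}. (- 1) ^ (card J + 1) * lambda_fun M X J {j} u"
  have U: "?U \<in> sets M"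
    using assms(2) by (intro sets.finite_UN) auto
  then have EU: "?E j \<inter> ?U \<in> sets M" for j
    by (intro sets.Int exceed_measurable)
  have "(\<integral>\<omega>. (\<Sum>j\<in>A. indicator (?E j) \<omega>) * indicator ?U \<omega> \<partial>M) =
      (\<integral>\<omega>. (\<Sum>j\<in>A. indicator (?E j \<inter> ?U) \<omega> :: real) \<partial>M)"
    by (intro Bochner_Integration.integral_cong refl) (rule sum_times_indicator)
  also have "\<dots> = (\<Sum>j\<in>A. (\<integral>\<omega>. indicator (?E j \<inter> ?U) \<omega> \<partial>M))"
    using EU by (intro Bochner_Integration.integral_sum integrable_real_indicator)
      (simp_all only: EU emeasure_less_infinity)
  also have "\<dots> = (\<Sum>j\<in>A. prob (?E j \<inter> ?U))"
    by (simp add: Int_absorb2[OF sets.sets_into_space[OF EU]])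
  finally have "CI_fun M X A B u = (\<Sum>j\<in>A. prob (?E j \<inter> ?U)) / prob ?U"
    by (simp add: CI_fun_def cond_exp_ev_def)
  also have "(\<Sum>j\<in>A. prob (?E j \<inter> ?U)) = (1 - u) * ?S"
    using assms(2,4,5) by (simp only: exceed_inter_union_prob sum_distrib_left)
  also have "prob ?U = 1 - u powr extremal_coeff M X B"
    using assms(2-5) by (rule union_exceed_prob)
  finally show ?thesis
    by (simp only: times_divide_eq_right mult.commute[of "1 - u"])
qed

text \<open>eps_B \<noteq> 0, since the union of exceedances over B is at least as likely as one of them.\<close>
lemma extremal_coeff_nonzero:
  assumes "finite B" and "B \<noteq> {}"
  shows "extremal_coeff M X B \<noteq> 0"
proof
  assume "extremal_coeff M X B = 0"
  then have "prob (\<Union>i\<in>B. exceed M X (1/2) i) = 0"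
    using union_exceed_prob[OF assms, of "1/2"] by simp
  moreover obtain b where "b \<in> B"
    using assms(2) by blast
  then have "prob (exceed M X (1/2) b) \<le> prob (\<Union>i\<in>B. exceed M X (1/2) i)"
    using assms(1) by (intro finite_measure_mono sets.finite_UN) auto
  ultimately show False
    using exceed_prob[of "1/2" b] by simp
qed

end

theorem mainTheorem2:
  fixes M :: "'a measure" and X :: "real \<times> real \<Rightarrow> 'a \<Rightarrow> real"
    and A B :: "(real \<times> real) set"
  assumes "max_stable_frechet M X"
    and "finite A" and "A \<noteq> {}" and "finite B" and "B \<noteq> {}"
  shows "(\<forall>J. J \<subseteq> B \<and> J \<noteq> {} \<longrightarrow> (\<forall>j\<in>A. \<exists>L. (lambda_fun M X J {j} \<longlongrightarrow> L) (at_left 1)))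
    \<and> (CI_fun M X A B \<longlongrightarrow>
         (\<Sum>j\<in>A. (\<Sum>J\<in>{J. J \<subseteq> B \<and> J \<noteq> {}}. (-1) ^ (card J + 1) * tail_lambda M X J {j})
                  / extremal_coeff M X B)) (at_left 1)"
proof -
  interpret max_stable_field M X
    by unfold_locales (rule assms(1))
  let ?S = "{J. J \<subseteq> B \<and> J \<noteq> {}}"
  have lambda_lim: "(lambda_fun M X J {j} \<longlongrightarrow> tail_lambda M X J {j}) (at_left 1)" if "J \<in> ?S" for J j
    using that assms(4) by (intro lambda_fun_tendsto_tail) (auto intro: finite_subset)
  have CI_eventually: "\<forall>\<^sub>F u in at_left 1. CI_fun M X A B u =
      (\<Sum>j\<in>A. \<Sum>J\<in>?S. (- 1) ^ (card J + 1) * lambda_fun M X J {j} u)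
        * ((1 - u) / (1 - u powr extremal_coeff M X B))"
    by (rule eventually_mono[OF eventually_at_left_real[OF zero_less_one]]) (simp add: CI_fun_eq assms)
  have "((\<lambda>u. (\<Sum>j\<in>A. \<Sum>J\<in>?S. (- 1) ^ (card J + 1) * lambda_fun M X J {j} u)
        * ((1 - u) / (1 - u powr extremal_coeff M X B))) \<longlongrightarrow>
      (\<Sum>j\<in>A. \<Sum>J\<in>?S. (- 1) ^ (card J + 1) * tail_lambda M X J {j}) * (1 / extremal_coeff M X B)) (at_left 1)"
    using assms(4,5) by (intro tendsto_intros lambda_lim difference_quotient_powr_at_left extremal_coeff_nonzero)
  then have "(CI_fun M X A B \<longlongrightarrow>
      (\<Sum>j\<in>A. \<Sum>J\<in>?S. (- 1) ^ (card J + 1) * tail_lambda M X J {j}) * (1 / extremal_coeff M X B)) (at_left 1)"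
    by (subst tendsto_cong[OF CI_eventually])
  then show ?thesis
    using lambda_lim by (simp add: sum_divide_distrib) blast
qed

end
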